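(* For every extreme point $(x,y,z)$ of the polyhedron GVC-LP, the vector $x$ is half-integral, i.e. $x_i\in\{0,\tfrac12,1\}$ for all $i\in V$.
   Context: Let $G=(V,E)$ be a graph. GVC-LP is the linear programming relaxation of the following mixed integer formulation of the generalized vertex cover problem (objective: minimize $\sum_{i\in V}c_ix_i+\sum_{(i,j)\in E}(q^2_{ij}-q^1_{ij})y_{ij}+\sum_{(i,j)\in E}(q^0_{ij}-q^1_{ij})z_{ij}$), with variables $x_i$ ($i\in V$), $y_{ij},z_{ij}$ ($(i,j)\in E$) and constraints: $x_i+x_j\le 1+y_{ij}$, $x_i\ge y_{ij}$, $x_j\ge y_{ij}$, $z_{ij}=1-x_i-x_j+y_{ij}$, $y_{ij}\ge 0$ for all $(i,j)\in E$, and $x_i\in\{0,1\}$, $z_{ij}\in\{0,1\}$. In GVC-LP the integrality constraints are replaced by $0\le x_i\le 1$ and $0\le z_{ij}\le 1$. Extreme points refer to the feasible region of GVC-LP. *)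

theory Defs
  imports "HOL-Analysis.Analysis"
begin

text \<open>Graph G = (V,E): V is the finite type 'v (V = UNIV), E is a set of
  ordered pairs, each undirected edge listed once with a chosen orientation.
  A point of GVC-LP is a triple (x,y,z) with x indexed by vertices and y,z
  indexed by pairs of vertices; the coordinates of y,z at non-edges are fixed
  to 0 (they are not variables of the LP), which is an affine isomorphism with
  the space of the genuine variables and hence does not affect extreme points.\<close>

definition simple_graph_edges :: "('v \<times> 'v) set \<Rightarrow> bool" where
  "simple_graph_edges E \<longleftrightarrow> (\<forall>(i,j)\<in>E. i \<noteq> j \<and> (j,i) \<notin> E)"

definition gvc_lp ::
  "('v::finite \<times> 'v) set \<Rightarrow> ((real^'v) \<times> (real^('v \<times> 'v)) \<times> (real^('v \<times> 'v))) set" where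
  "gvc_lp E = {(x,y,z).
      (\<forall>i. 0 \<le> x$i \<and> x$i \<le> 1) \<and>
      (\<forall>(i,j)\<in>E.
          x$i + x$j \<le> 1 + y$(i,j) \<and>
          x$i \<ge> y$(i,j) \<and> x$j \<ge> y$(i,j) \<and>
          z$(i,j) = 1 - x$i - x$j + y$(i,j) \<and>
          y$(i,j) \<ge> 0 \<and>
          0 \<le> z$(i,j) \<and> z$(i,j) \<le> 1) \<and>
      (\<forall>e. e \<notin> E \<longrightarrow> y$e = 0 \<and> z$e = 0)}"

end

theory Submission
  imports Defs
begin

text \<open>Move every coordinate of \<open>x\<close> lying strictly between 0 and 1/2 up, and every one
  strictly between 1/2 and 1 down, all at the same speed. This preserves each relation
  \<open>x\<^sub>i = 0\<close>, \<open>x\<^sub>i = 1\<close>, \<open>x\<^sub>i = x\<^sub>j\<close>, \<open>x\<^sub>i + x\<^sub>j = 1\<close>, so \<open>y\<close> can be moved along with \<open>x\<close>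
  in such a way that every constraint of GVC-LP that is tight stays tight, while the slack
  constraints survive a small enough step. Both directions of this move stay in GVC-LP,
  so at an extreme point the move must be trivial, i.e. no coordinate of \<open>x\<close> lies outside
  \<open>{0, 1/2, 1}\<close>.\<close>

lemma extreme_point_symmetric_move_eq_0:
  fixes a v :: "'a::real_vector"
  assumes "a extreme_point_of S" "a + v \<in> S" "a - v \<in> S"
  shows "v = 0"
proof (rule ccontr)
  assume "v \<noteq> 0"
  have "a + v \<noteq> a - v"
  proof
    assume "a + v = a - v"
    then have "(2::real) *\<^sub>R v = 0"
      by (simp add: scaleR_2 eq_neg_iff_add_eq_0)
    with \<open>v \<noteq> 0\<close> show False
      by simp
  qed
  moreover have "midpoint (a + v) (a - v) = a"
    by (simp add: midpoint_def scaleR_add_right flip: scaleR_add_left)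
  ultimately have "a \<in> open_segment (a + v) (a - v)"
    using midpoint_in_open_segment by metis
  with assms show False
    unfolding extreme_point_of_def by blast
qed

lemma eventually_nonneg_perturb:
  fixes s a :: real
  assumes "0 \<le> s" and "s = 0 \<Longrightarrow> a = 0"
  shows "\<forall>\<^sub>F t in nhds 0. 0 \<le> s + t * a"
proof (cases "s = 0")
  case True
  with assms show ?thesis by simp
next
  case False
  have "((\<lambda>t. s + t * a) \<longlongrightarrow> s + 0 * a) (nhds 0)"
    by (intro tendsto_intros filterlim_ident)
  then have "\<forall>\<^sub>F t in nhds 0. 0 < s + t * a"
    using False assms(1) by (auto dest: order_tendstoD(1)[of _ _ _ 0])
  then show ?thesis
    by eventually_elim simp
qed

definition toward_half :: "real \<Rightarrow> real" where
  "toward_half v = (if 0 < v \<and> v < 1/2 then 1 else if 1/2 < v \<and> v < 1 then -1 else 0)"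

lemma toward_half_0 [simp]: "toward_half 0 = 0"
  and toward_half_1 [simp]: "toward_half 1 = 0"
  by (simp_all add: toward_half_def)

lemma toward_half_complement: "toward_half (1 - v) = - toward_half v"
  by (simp add: toward_half_def)

lemma toward_half_sum_1:
  assumes "xi + xj = 1"
  shows "toward_half xi + toward_half xj = 0"
proof -
  have "xj = 1 - xi" using assms by simp
  then show ?thesis by (simp add: toward_half_complement)
qed

lemma toward_half_nonzero:
  assumes "0 \<le> v" "v \<le> 1" "v \<notin> {0, 1/2, 1}"
  shows "toward_half v \<noteq> 0"
  using assms by (auto simp: toward_half_def)

lemma eventually_unit_interval_toward_half:
  assumes "0 \<le> v" "v \<le> 1"
  shows "\<forall>\<^sub>F t in nhds 0. 0 \<le> v + t * toward_half v \<and> v + t * toward_half v \<le> 1"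
proof -
  have "\<forall>\<^sub>F t in nhds 0. 0 \<le> v + t * toward_half v"
    using assms by (intro eventually_nonneg_perturb) auto
  moreover have "\<forall>\<^sub>F t in nhds 0. 0 \<le> (1 - v) + t * - toward_half v"
    using assms by (intro eventually_nonneg_perturb) auto
  ultimately show ?thesis
    by eventually_elim simp
qed

text \<open>The move of \<open>y\<^sub>i\<^sub>j\<close>: follow whichever of the constraints \<open>y\<^sub>i\<^sub>j \<le> x\<^sub>i\<close>, \<open>y\<^sub>i\<^sub>j \<le> x\<^sub>j\<close>,
  \<open>x\<^sub>i + x\<^sub>j \<le> 1 + y\<^sub>i\<^sub>j\<close> is tight. When several are tight the prescriptions agree.\<close>

definition edge_move :: "real \<Rightarrow> real \<Rightarrow> real \<Rightarrow> real" where
  "edge_move xi xj yij =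
     (if yij = xi then toward_half xi
      else if yij = xj then toward_half xj
      else if yij = xi + xj - 1 then toward_half xi + toward_half xj
      else 0)"

lemma edge_move_tight:
  shows "yij = xi \<Longrightarrow> edge_move xi xj yij = toward_half xi"
    and "yij = xj \<Longrightarrow> edge_move xi xj yij = toward_half xj"
    and "yij = xi + xj - 1 \<Longrightarrow> edge_move xi xj yij = toward_half xi + toward_half xj"
    and "yij = 0 \<Longrightarrow> edge_move xi xj yij = 0"
  by (auto simp: edge_move_def toward_half_sum_1)

lemma eventually_edge_constraints:
  fixes xi xj yij :: real
  defines "xi' \<equiv> \<lambda>t. xi + t * toward_half xi"
    and "xj' \<equiv> \<lambda>t. xj + t * toward_half xj"
    and "yij' \<equiv> \<lambda>t. yij + t * edge_move xi xj yij"
  assumes "xi + xj \<le> 1 + yij" "yij \<le> xi" "yij \<le> xj" "0 \<le> yij"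
  shows "\<forall>\<^sub>F t in nhds 0.
    xi' t + xj' t \<le> 1 + yij' t \<and> yij' t \<le> xi' t \<and> yij' t \<le> xj' t \<and> 0 \<le> yij' t"
proof -
  let ?e = "edge_move xi xj yij"
  have "\<forall>\<^sub>F t in nhds 0. 0 \<le> (1 + yij - xi - xj) + t * (?e - toward_half xi - toward_half xj)"
    using assms(4) edge_move_tight(3)[of yij xi xj] by (intro eventually_nonneg_perturb) auto
  moreover have "\<forall>\<^sub>F t in nhds 0. 0 \<le> (xi - yij) + t * (toward_half xi - ?e)"
    using assms(5) edge_move_tight(1)[of yij xi xj] by (intro eventually_nonneg_perturb) auto
  moreover have "\<forall>\<^sub>F t in nhds 0. 0 \<le> (xj - yij) + t * (toward_half xj - ?e)"
    using assms(6) edge_move_tight(2)[of yij xj xi] by (intro eventually_nonneg_perturb) auto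
  moreover have "\<forall>\<^sub>F t in nhds 0. 0 \<le> yij + t * ?e"
    using assms(7) edge_move_tight(4)[of yij xi xj] by (intro eventually_nonneg_perturb) auto
  ultimately show ?thesis
    unfolding xi'_def xj'_def yij'_def by eventually_elim (simp add: algebra_simps)
qed

definition gvc_move ::
  "('v::finite \<times> 'v) set \<Rightarrow> real^'v \<Rightarrow> real^('v \<times> 'v) \<Rightarrow>
     (real^'v) \<times> (real^('v \<times> 'v)) \<times> (real^('v \<times> 'v))" where
  "gvc_move E x y =
     ((\<chi> i. toward_half (x$i)),
      (\<chi> e. if e \<in> E then edge_move (x$fst e) (x$snd e) (y$e) else 0),
      (\<chi> e. if e \<in> E then edge_move (x$fst e) (x$snd e) (y$e)
                           - toward_half (x$fst e) - toward_half (x$snd e) else 0))"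

lemma eventually_gvc_move_feasible:
  assumes "(x, y, z) \<in> gvc_lp E"
  shows "\<forall>\<^sub>F t in nhds 0. (x, y, z) + t *\<^sub>R gvc_move E x y \<in> gvc_lp E"
proof -
  have x: "\<And>i. 0 \<le> x$i \<and> x$i \<le> 1"
    and edge: "\<And>i j. (i, j) \<in> E \<Longrightarrow>
      x$i + x$j \<le> 1 + y$(i,j) \<and> y$(i,j) \<le> x$i \<and> y$(i,j) \<le> x$j \<and>
      z$(i,j) = 1 - x$i - x$j + y$(i,j) \<and> 0 \<le> y$(i,j)"
    and off: "\<And>e. e \<notin> E \<Longrightarrow> y$e = 0 \<and> z$e = 0"
    using assms unfolding gvc_lp_def by auto
  have "\<forall>\<^sub>F t in nhds 0. \<forall>i. 0 \<le> x$i + t * toward_half (x$i) \<and> x$i + t * toward_half (x$i) \<le> 1"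
    using x by (intro eventually_all_finite eventually_unit_interval_toward_half) auto
  moreover have "\<forall>\<^sub>F t in nhds 0. \<forall>(i, j)\<in>E.
      let xi' = x$i + t * toward_half (x$i); xj' = x$j + t * toward_half (x$j);
          yij' = y$(i,j) + t * edge_move (x$i) (x$j) (y$(i,j))
      in xi' + xj' \<le> 1 + yij' \<and> yij' \<le> xi' \<and> yij' \<le> xj' \<and> 0 \<le> yij'"
    using edge unfolding Let_def split_beta'
    by (intro eventually_ball_finite ballI eventually_edge_constraints) auto
  \<comment> \<open>the constraints on \<open>z\<close> follow: \<open>z \<ge> 0\<close> is the first edge constraint, and \<open>z \<le> 1\<close>
    from \<open>y\<^sub>i\<^sub>j \<le> x\<^sub>i\<close> and \<open>x\<^sub>j \<ge> 0\<close>\<close>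
  ultimately show ?thesis
  proof eventually_elim
    case (elim t)
    then show ?case
      using x edge off
      unfolding gvc_lp_def gvc_move_def Let_def
      by (fastforce simp: algebra_simps)
  qed
qed

theorem theorem5:
  fixes E :: "('v::finite \<times> 'v) set"
    and x :: "real^'v" and y z :: "real^('v \<times> 'v)"
  assumes "simple_graph_edges E"
    and "(x, y, z) extreme_point_of gvc_lp E"
  shows "\<forall>i. x$i \<in> {0, 1/2, 1}"
proof -
  have feasible: "(x, y, z) \<in> gvc_lp E"
    using assms(2) by (simp add: extreme_point_of_def)
  obtain r where "r > 0"
    and small: "\<And>t. dist t 0 < r \<Longrightarrow> (x, y, z) + t *\<^sub>R gvc_move E x y \<in> gvc_lp E"
    using eventually_gvc_move_feasible[OF feasible] unfolding eventually_nhds_metric by blast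
  define t where "t = r / 2"
  have plus: "(x, y, z) + t *\<^sub>R gvc_move E x y \<in> gvc_lp E"
    and minus: "(x, y, z) - t *\<^sub>R gvc_move E x y \<in> gvc_lp E"
    using small[of t] small[of "- t"] \<open>r > 0\<close> by (auto simp: t_def)
  have "t *\<^sub>R gvc_move E x y = 0"
    by (rule extreme_point_symmetric_move_eq_0[OF assms(2) plus minus])
  then have "gvc_move E x y = 0"
    using \<open>r > 0\<close> by (simp add: t_def)
  then have "\<forall>i. toward_half (x$i) = 0"
    by (simp add: gvc_move_def vec_eq_iff zero_prod_def)
  moreover have "\<forall>i. 0 \<le> x$i \<and> x$i \<le> 1"
    using feasible by (simp add: gvc_lp_def)
  ultimately show ?thesis
    using toward_half_nonzero by blast
qed

end
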